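(* Let $1<p<\infty$ and $\alpha\in\mathbb R$. There is $C>0$ such that for all $N\ge1$, all $A\subset\mathbb Z$ with $|A|\le N$, and all scalars $|\varepsilon_n|\le1$, $$\Big\|\sum_{n\in A}\varepsilon_ne^{inx}\Big\|_{L^p(\log L)^\alpha(\mathbb T)}\le C\max\Big\{N^{1/2},\ N^{1-\frac1p}(\log(e+N))^\alpha\Big\}.$$
   Context: $\mathbb T\equiv[-\pi,\pi)$. $L^p(\log L)^\alpha(\mathbb T)$ is the Orlicz space $L^\Phi$ with $\Phi(t)=\int_0^ts^{p-1}(\log(c+s))^{\alpha p}ds$ ($c>1$ fixed large enough that $\Phi$ is a Young function), with Luxemburg norm $\inf\{\lambda>0:\int_{\mathbb T}\Phi(|f|/\lambda)\le1\}$. *)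

theory Defs
  imports "HOL-Analysis.Analysis"
begin

definition LlogL_Phi :: "real \<Rightarrow> real \<Rightarrow> real \<Rightarrow> real \<Rightarrow> real" where
  "LlogL_Phi p \<alpha> c t = integral {0..t} (\<lambda>s. s powr (p - 1) * (ln (c + s)) powr (\<alpha> * p))"

definition young_function :: "(real \<Rightarrow> real) \<Rightarrow> bool" where
  "young_function \<Phi> \<longleftrightarrow> convex_on {0..} \<Phi> \<and> \<Phi> 0 = 0 \<and> (\<forall>t>0. \<Phi> t > 0)
     \<and> filterlim \<Phi> at_top at_top"

definition luxemburg_norm :: "(real \<Rightarrow> real) \<Rightarrow> (real \<Rightarrow> complex) \<Rightarrow> real" where
  "luxemburg_norm \<Phi> f = Inf {l::real. l > 0 \<and>
      (\<integral>\<^sup>+ x \<in> {-pi..<pi}. ennreal (\<Phi> (norm (f x) / l)) \<partial>lborel) \<le> 1}"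

definition LplogL_norm :: "real \<Rightarrow> real \<Rightarrow> real \<Rightarrow> (real \<Rightarrow> complex) \<Rightarrow> real" where
  "LplogL_norm p \<alpha> c f = luxemburg_norm (LlogL_Phi p \<alpha> c) f"

end

theory Submission
  imports Defs "HOL-Real_Asymp.Real_Asymp"
begin

text \<open>
  A trigonometric polynomial \<open>f\<close> with at most \<open>N\<close> coefficients of modulus \<open>\<le> 1\<close> satisfies
  \<open>\<bar>f\<bar> \<le> N\<close> and, by Parseval, \<open>\<integral>\<bar>f\<bar>\<^sup>2 \<le> 2\<pi>N\<close>. Let \<open>R = max \<surd>N (N\<^bsup>1-1/p\<^esup> log(e+N)\<^sup>\<alpha>)\<close>.
  If the density \<open>t\<^bsup>p-1\<^esup> log(c+t)\<^bsup>\<alpha>p\<^esup>\<close> of \<open>\<Phi>\<close> is at most \<open>a + b t\<close> on \<open>[0, N/R]\<close>, then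
  \<open>\<Phi> u \<le> a + (a + b) u\<^sup>2\<close> there, hence \<open>\<integral>\<Phi>(\<bar>f\<bar>/R) \<le> 2\<pi>(a + (a + b) N/R\<^sup>2)\<close>. The choice of \<open>R\<close>
  makes such \<open>a, b\<close> available with \<open>a + b N/R\<^sup>2\<close> bounded independently of \<open>N\<close>; this is checked
  separately for \<open>p \<le> 2\<close> (\<open>p < 2\<close> if \<open>\<alpha> > 0\<close>), for \<open>p \<ge> 2, \<alpha> \<ge> 0\<close> and for \<open>p > 2, \<alpha> < 0\<close>. Convexity of \<open>\<Phi>\<close>
  finally turns a bounded modular at scale \<open>R\<close> into a bound on the Luxemburg norm.
\<close>

lemma powr_le_mult_self:
  fixes t T q :: real
  assumes "0 \<le> t" and "t \<le> T" and "q \<ge> 1"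
  shows "t powr q \<le> T powr (q - 1) * t"
proof (cases "t = 0")
  case False
  then have "t powr q = t powr (q - 1) * t" using assms by (simp add: powr_diff)
  moreover have "t powr (q - 1) \<le> T powr (q - 1)" using assms by (intro powr_mono2) auto
  ultimately show ?thesis using assms by (simp add: mult_right_mono)
qed (use assms in simp)

lemma add_powr_le_powr_add:
  fixes a y p :: real
  assumes "a \<ge> 1" and "y \<ge> 0" and "p \<ge> 1"
  shows "a + y powr p \<le> (a + y) powr p"
proof -
  have "1 \<le> (a + y) powr (p - 1)" and "y powr (p - 1) \<le> (a + y) powr (p - 1)"
    using assms by (auto intro: ge_one_powr_ge_zero powr_mono2)
  then have "a * 1 + y * y powr (p - 1) \<le> a * (a + y) powr (p - 1) + y * (a + y) powr (p - 1)"
    using assms by (intro add_mono mult_left_mono) auto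
  also have "\<dots> = (a + y) powr (p - 1) * (a + y)" by (simp add: algebra_simps)
  also have "\<dots> = (a + y) powr p" using assms by (simp add: powr_diff)
  finally show ?thesis using assms by (simp add: powr_mult_base)
qed

lemma ln_exp_add_ge_one: "x \<ge> 0 \<Longrightarrow> ln (exp 1 + x) \<ge> (1::real)"
  using ln_mono[of "exp 1" "exp 1 + x"] by simp

lemma ln_add_le_ln_exp_add:
  fixes c x :: real
  assumes "c > 1" and "x \<ge> 0"
  shows "ln (c + x) \<le> (1 + ln c) * ln (exp 1 + x)"
proof -
  have "c * 1 \<le> c * exp 1" and "1 * x \<le> c * x" using assms by (intro mult_mono; simp)+
  then have "c + x \<le> c * (exp 1 + x)" unfolding distrib_left by linarith
  then have "ln (c + x) \<le> ln (c * (exp 1 + x))" using assms by (intro ln_mono) auto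
  also have "\<dots> = ln c + ln (exp 1 + x)"
    using assms add_pos_nonneg[OF exp_gt_zero[of 1], of x] by (simp add: ln_mult)
  finally have "ln (c + x) \<le> ln c + ln (exp 1 + x)" .
  also have "\<dots> \<le> (1 + ln c) * ln (exp 1 + x)"
    using assms ln_exp_add_ge_one[of x] mult_left_mono[of 1 "ln (exp 1 + x)" "ln c"] by (simp add: distrib_right)
  finally show ?thesis .
qed

lemma ln_exp_add_powr_le:
  fixes c p y :: real
  assumes "c > 1" and "p \<ge> 1" and "y \<ge> 0"
  shows "ln (exp 1 + y powr p) \<le> p * (1 + 1 / ln c) * ln (c + y)"
proof -
  have "ln (exp 1 + y powr p) \<le> ln ((exp 1 + y) powr p)"
    using add_powr_le_powr_add[of "exp 1" y p] assms by (intro ln_mono) (auto intro: add_pos_nonneg)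
  also have "\<dots> = p * ln (exp 1 + y)" using assms by (simp add: ln_powr add_pos_nonneg)
  also have "ln (exp 1 + y) \<le> 1 + ln (c + y)"
  proof -
    have "exp 1 * 1 \<le> exp 1 * c" and "1 * y \<le> exp 1 * y" using assms by (intro mult_mono; simp)+
    then have "exp 1 + y \<le> exp 1 * (c + y)" unfolding distrib_left by linarith
    then have "ln (exp 1 + y) \<le> ln (exp 1 * (c + y))" using assms by (intro ln_mono) (auto intro: add_pos_nonneg)
    then show ?thesis using assms by (simp add: ln_mult)
  qed
  also have "1 \<le> ln (c + y) / ln c" using assms by (simp add: ln_mono)
  finally show ?thesis using assms by (simp add: algebra_simps mult_left_mono)
qed

lemma ln_add_half_le_ln_add_sqrt:
  fixes c u :: real
  assumes "c > 1" and "u \<ge> 0"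
  shows "ln (c + u) / 2 \<le> ln (c + sqrt u)"
proof -
  have "(c + sqrt u)\<^sup>2 = c * c + 2 * c * sqrt u + u" using assms by (simp add: power2_eq_square algebra_simps)
  moreover have "c * 1 \<le> c * c" using assms by (intro mult_left_mono) auto
  moreover have "0 \<le> c * sqrt u" using assms by simp
  ultimately have "c + u \<le> (c + sqrt u)\<^sup>2" by linarith
  then have "ln (c + u) \<le> ln ((c + sqrt u)\<^sup>2)" using assms by (intro ln_mono) auto
  also have "\<dots> = 2 * ln (c + sqrt u)" using assms by (subst ln_realpow) auto
  finally show ?thesis by simp
qed

lemma powr_ln_exp_add_bounded:
  fixes a g :: real
  assumes "a < 0"
  shows "\<exists>T. \<forall>x\<ge>1. x powr a * ln (exp 1 + x) powr g \<le> T"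
proof -
  have "((\<lambda>x::real. x powr a * ln (exp 1 + x) powr g) \<longlongrightarrow> 0) at_top"
    using assms by real_asymp
  then have "eventually (\<lambda>x. x powr a * ln (exp 1 + x) powr g < 1) at_top"
    by (rule order_tendstoD) simp
  then obtain U where U: "\<And>x. x \<ge> U \<Longrightarrow> x powr a * ln (exp 1 + x) powr g < 1"
    by (auto simp: eventually_at_top_linorder)
  define L where "L = ln (exp 1 + max 1 U) powr \<bar>g\<bar>"
  have "x powr a * ln (exp 1 + x) powr g \<le> max 1 L" if "x \<ge> 1" for x
  proof (cases "x \<ge> U")
    case True
    then show ?thesis using U[OF True] by simp
  next
    case False
    have l: "ln (exp 1 + x) \<ge> 1" using ln_exp_add_ge_one that by simp
    have "x powr a \<le> 1" using that assms powr_mono[of a 0 x] by simp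
    moreover have "ln (exp 1 + x) powr g \<le> ln (exp 1 + x) powr \<bar>g\<bar>" using l by (intro powr_mono) auto
    moreover have "\<dots> \<le> L"
      unfolding L_def using False that l by (intro powr_mono2 ln_mono) (auto intro: add_pos_nonneg)
    ultimately have "x powr a * ln (exp 1 + x) powr g \<le> 1 * L" by (intro mult_mono) auto
    then show ?thesis by simp
  qed
  then show ?thesis by blast
qed

lemma powr_div_mult_div_sq_eq:
  fixes x l q :: real
  assumes "x > 0" and "l > 0"
  shows "(x / l) powr (q - 2) * x / l\<^sup>2 = x powr (q - 1) / l powr q"
proof -
  have "(x / l) powr (q - 2) * x / l\<^sup>2 = (x powr (q - 2) * x powr 1) / (l powr (q - 2) * l powr 2)"
    using assms by (simp add: powr_divide powr_numeral)
  also have "\<dots> = x powr ((q - 2) + 1) / l powr ((q - 2) + 2)" by (simp only: powr_add)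
  finally show ?thesis by simp
qed

lemma cis_int_has_integral:
  fixes k :: int
  shows "((\<lambda>x. cis (of_int k * x)) has_integral (if k = 0 then 2 * pi else 0)) {-pi..pi}"
proof (cases "k = 0")
  case True
  then show ?thesis using has_integral_const_real[of "1::complex" "-pi" pi] by (simp add: scaleR_conv_of_real)
next
  case False
  define F where "F x = cis (of_int k * x) / (\<i> * of_int k)" for x
  have "(F has_vector_derivative cis (of_int k * x)) (at x within {-pi..pi})" for x
  proof -
    have "((\<lambda>z. exp (\<i> * of_int k * z) / (\<i> * of_int k)) has_field_derivative exp (\<i> * of_int k * of_real x))
        (at (of_real x))"
      using False by (auto intro!: derivative_eq_intros)
    from has_vector_derivative_real_field[OF this] show ?thesis
      unfolding F_def by (simp add: cis_conv_exp mult.assoc)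
  qed
  then have "((\<lambda>x. cis (of_int k * x)) has_integral (F pi - F (-pi))) {-pi..pi}"
    by (intro fundamental_theorem_of_calculus) auto
  moreover have "cis (of_int k * pi) = cis (- (of_int k * pi)) * cis (2 * pi * of_int k)"
    by (simp add: cis_mult algebra_simps)
  ultimately show ?thesis using False by (simp add: F_def)
qed

lemma norm_trig_poly_le:
  assumes "finite A" and "\<forall>n\<in>A. norm (\<epsilon> n) \<le> 1"
  shows "norm (\<Sum>n\<in>A. \<epsilon> n * cis (of_int n * x)) \<le> card A"
proof -
  have "norm (\<Sum>n\<in>A. \<epsilon> n * cis (of_int n * x)) \<le> (\<Sum>n\<in>A. norm (\<epsilon> n * cis (of_int n * x)))"
    by (rule norm_sum)
  also have "\<dots> \<le> (\<Sum>n\<in>A. 1)" using assms by (intro sum_mono) (simp add: norm_mult)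
  finally show ?thesis by simp
qed

lemma parseval_trig_poly:
  fixes \<epsilon> :: "int \<Rightarrow> complex"
  assumes "finite A"
  shows "((\<lambda>x. (norm (\<Sum>n\<in>A. \<epsilon> n * cis (of_int n * x)))\<^sup>2) has_integral
            (2 * pi * (\<Sum>n\<in>A. (norm (\<epsilon> n))\<^sup>2))) {-pi..pi}"
proof -
  define f where "f x = (\<Sum>n\<in>A. \<epsilon> n * cis (of_int n * x))" for x
  have "f x * cnj (f x) = (\<Sum>n\<in>A. \<Sum>m\<in>A. (\<epsilon> n * cnj (\<epsilon> m)) * cis (of_int (n - m) * x))" for x
  proof -
    have "f x * cnj (f x) = (\<Sum>n\<in>A. \<Sum>m\<in>A. (\<epsilon> n * cis (of_int n * x)) * cnj (\<epsilon> m * cis (of_int m * x)))"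
      unfolding f_def by (simp add: sum_distrib_left sum_distrib_right cnj_sum) (rule sum.swap)
    also have "\<dots> = (\<Sum>n\<in>A. \<Sum>m\<in>A. (\<epsilon> n * cnj (\<epsilon> m)) * cis (of_int (n - m) * x))"
      by (intro sum.cong refl) (simp add: cis_cnj cis_mult algebra_simps)
    finally show ?thesis .
  qed
  moreover have "((\<lambda>x. \<Sum>n\<in>A. \<Sum>m\<in>A. (\<epsilon> n * cnj (\<epsilon> m)) * cis (of_int (n - m) * x)) has_integral
      (\<Sum>n\<in>A. \<Sum>m\<in>A. (\<epsilon> n * cnj (\<epsilon> m)) * (if n - m = 0 then 2 * pi else 0))) {-pi..pi}"
    by (intro has_integral_sum assms has_integral_mult_right cis_int_has_integral)
  moreover have "(\<Sum>n\<in>A. \<Sum>m\<in>A. (\<epsilon> n * cnj (\<epsilon> m)) * (if n - m = 0 then 2 * pi else 0))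
      = (\<Sum>n\<in>A. \<epsilon> n * cnj (\<epsilon> n) * (2 * pi))"
    using assms by (simp add: if_distrib sum.delta cong: if_cong)
  ultimately have "((\<lambda>x. f x * cnj (f x)) has_integral (\<Sum>n\<in>A. \<epsilon> n * cnj (\<epsilon> n) * (2 * pi))) {-pi..pi}"
    by simp
  from has_integral_Re[OF this] have "((\<lambda>x. (norm (f x))\<^sup>2) has_integral
      Re (\<Sum>n\<in>A. \<epsilon> n * cnj (\<epsilon> n) * (2 * pi))) {-pi..pi}"
    by (simp add: complex_mult_cnj cmod_def)
  then show ?thesis
    unfolding f_def by (simp add: complex_mult_cnj cmod_def sum_distrib_left mult.commute)
qed

lemma luxemburg_norm_le_of_majorant:
  fixes \<Phi> :: "real \<Rightarrow> real" and f :: "real \<Rightarrow> complex"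
  assumes "l > 0" and "\<And>x. 0 \<le> g x" and "\<And>x. x \<in> {-pi..<pi} \<Longrightarrow> \<Phi> (norm (f x) / l) \<le> g x"
    and "(g has_integral J) {-pi..pi}" and "J \<le> 1"
  shows "luxemburg_norm \<Phi> f \<le> l"
proof -
  have "(\<integral>\<^sup>+ x \<in> {-pi..<pi}. ennreal (\<Phi> (norm (f x) / l)) \<partial>lborel)
      \<le> (\<integral>\<^sup>+ x. ennreal (indicator {-pi..pi} x * g x) \<partial>lborel)"
  proof (rule nn_integral_mono)
    fix x
    show "ennreal (\<Phi> (norm (f x) / l)) * indicator {-pi..<pi} x \<le> ennreal (indicator {-pi..pi} x * g x)"
      using assms(3)[of x] by (cases "x \<in> {-pi..<pi}") (auto intro: ennreal_leI)
  qed
  also have "\<dots> = ennreal J"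
    using assms(2,4) by (intro nn_integral_has_integral_lebesgue)
  also have "\<dots> \<le> 1" using \<open>J \<le> 1\<close> by simp
  finally have "l \<in> {l. l > 0 \<and> (\<integral>\<^sup>+ x \<in> {-pi..<pi}. ennreal (\<Phi> (norm (f x) / l)) \<partial>lborel) \<le> 1}"
    using \<open>l > 0\<close> by simp
  then show ?thesis
    unfolding luxemburg_norm_def by (rule cInf_lower) (auto intro: bdd_belowI[where m = 0])
qed

lemma young_function_scale_le:
  assumes "young_function \<Phi>" and "B \<ge> 1" and "u \<ge> 0"
  shows "\<Phi> (u / B) \<le> \<Phi> u / B"
proof -
  have "\<Phi> ((1 - 1 / B) *\<^sub>R 0 + (1 / B) *\<^sub>R u) \<le> (1 - 1 / B) * \<Phi> 0 + 1 / B * \<Phi> u"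
    using assms unfolding young_function_def by (intro convex_onD) auto
  then show ?thesis using assms by (simp add: young_function_def)
qed

lemma luxemburg_norm_trig_poly_le:
  fixes \<Phi> :: "real \<Rightarrow> real" and \<epsilon> :: "int \<Rightarrow> complex" and N R :: real
  assumes young: "young_function \<Phi>" and "finite A" and "card A \<le> N" and "\<forall>n\<in>A. norm (\<epsilon> n) \<le> 1"
    and "R > 0" and "a \<ge> 0" and "b \<ge> 0" and majorant: "\<And>u. 0 \<le> u \<Longrightarrow> u \<le> N / R \<Longrightarrow> \<Phi> u \<le> a + b * u\<^sup>2"
  shows "luxemburg_norm \<Phi> (\<lambda>x. \<Sum>n\<in>A. \<epsilon> n * cis (of_int n * x)) \<le> max 1 (2 * pi * (a + b * N / R\<^sup>2)) * R"
proof -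
  define f where "f x = (\<Sum>n\<in>A. \<epsilon> n * cis (of_int n * x))" for x
  define I where "I = 2 * pi * (\<Sum>n\<in>A. (norm (\<epsilon> n))\<^sup>2)"
  define B where "B = max 1 (2 * pi * (a + b * N / R\<^sup>2))"
  have "B \<ge> 1" unfolding B_def by simp
  have f_le: "norm (f x) \<le> N" for x
    using norm_trig_poly_le[OF assms(2,4)] assms(3) unfolding f_def by (meson order_trans of_nat_le_iff)
  have I: "((\<lambda>x. (norm (f x))\<^sup>2) has_integral I) {-pi..pi}"
    unfolding f_def I_def by (rule parseval_trig_poly[OF assms(2)])
  have "I \<le> 2 * pi * N"
  proof -
    have "(\<Sum>n\<in>A. (norm (\<epsilon> n))\<^sup>2) \<le> (\<Sum>n\<in>A. 1)" using assms(4) by (intro sum_mono) (simp add: power_le_one)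
    then show ?thesis using assms(3) unfolding I_def by simp
  qed
  show ?thesis unfolding f_def[symmetric] B_def[symmetric]
  proof (rule luxemburg_norm_le_of_majorant)
    show "B * R > 0" using \<open>B \<ge> 1\<close> \<open>R > 0\<close> by simp
    show "((\<lambda>x. (a + b * (norm (f x) / R)\<^sup>2) / B) has_integral (2 * pi * a + b * I / R\<^sup>2) / B) {-pi..pi}"
      using has_integral_add[OF has_integral_const_real[of a "-pi" pi] has_integral_mult_right[OF I, of "b / R\<^sup>2"]]
      by (intro has_integral_divide) (simp add: power_divide)
    have "b * I / R\<^sup>2 \<le> b * (2 * pi * N) / R\<^sup>2" using \<open>I \<le> 2 * pi * N\<close> assms by (intro divide_right_mono mult_left_mono) auto
    then show "(2 * pi * a + b * I / R\<^sup>2) / B \<le> 1"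
      using \<open>B \<ge> 1\<close> unfolding B_def by (simp add: field_simps)
  next
    fix x
    have "\<Phi> (norm (f x) / (B * R)) \<le> \<Phi> (norm (f x) / R) / B"
      using young_function_scale_le[OF young \<open>B \<ge> 1\<close>, of "norm (f x) / R"] \<open>R > 0\<close> by (simp add: field_simps)
    also have "\<dots> \<le> (a + b * (norm (f x) / R)\<^sup>2) / B"
    proof (rule divide_right_mono)
      show "\<Phi> (norm (f x) / R) \<le> a + b * (norm (f x) / R)\<^sup>2"
        using f_le[of x] \<open>R > 0\<close> by (intro majorant) (auto intro: divide_right_mono)
    qed (use \<open>B \<ge> 1\<close> in simp)
    finally show "\<Phi> (norm (f x) / (B * R)) \<le> (a + b * (norm (f x) / R)\<^sup>2) / B" .
  qed (use \<open>B \<ge> 1\<close> assms in auto)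
qed

definition LlogL_density :: "real \<Rightarrow> real \<Rightarrow> real \<Rightarrow> real \<Rightarrow> real" where
  "LlogL_density p \<alpha> c t = t powr (p - 1) * ln (c + t) powr (\<alpha> * p)"

definition LlogL_rate :: "real \<Rightarrow> real \<Rightarrow> real \<Rightarrow> real" where
  "LlogL_rate p \<alpha> x = max (sqrt x) (x powr (1 - 1 / p) * ln (exp 1 + x) powr \<alpha>)"

lemma LlogL_Phi_le_of_density_le:
  assumes "u \<ge> 0" and "a \<ge> 0" and "b \<ge> 0"
    and density_le: "\<And>t. 0 \<le> t \<Longrightarrow> t \<le> u \<Longrightarrow> LlogL_density p \<alpha> c t \<le> a + b * t"
  shows "LlogL_Phi p \<alpha> c u \<le> a * u + b * u\<^sup>2 / 2"
proof -
  have affine: "((\<lambda>t. a + b * t) has_integral (a * u + b * u\<^sup>2 / 2)) {0..u}"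
    using has_integral_add[OF has_integral_const_real[of a 0 u] has_integral_mult_right[OF ident_has_integral[of 0 u], of b]]
      \<open>u \<ge> 0\<close> by (simp add: algebra_simps)
  show ?thesis
  proof (cases "LlogL_density p \<alpha> c integrable_on {0..u}")
    case True
    then show ?thesis
      unfolding LlogL_Phi_def LlogL_density_def[symmetric]
      using has_integral_le[OF integrable_integral[OF True] affine] density_le by auto
  next
    case False
    then show ?thesis
      unfolding LlogL_Phi_def LlogL_density_def[symmetric] using assms(1-3)
      by (simp add: not_integrable_integral)
  qed
qed

lemma LlogL_Phi_quadratic_majorant:
  assumes "u \<ge> 0" and "a \<ge> 0" and "b \<ge> 0"
    and "\<And>t. 0 \<le> t \<Longrightarrow> t \<le> u \<Longrightarrow> LlogL_density p \<alpha> c t \<le> a + b * t"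
  shows "LlogL_Phi p \<alpha> c u \<le> a + (a + b) * u\<^sup>2"
proof -
  have "0 \<le> (u - 1)\<^sup>2" by simp
  then have "u \<le> 1 + u\<^sup>2" using \<open>u \<ge> 0\<close> by (simp add: power2_diff)
  then have "a * u \<le> a * (1 + u\<^sup>2)" using \<open>a \<ge> 0\<close> by (rule mult_left_mono)
  moreover have "0 \<le> b * u\<^sup>2" using \<open>b \<ge> 0\<close> by simp
  ultimately have "a * u + b * u\<^sup>2 / 2 \<le> a + (a + b) * u\<^sup>2" by (simp add: algebra_simps)
  then show ?thesis using LlogL_Phi_le_of_density_le[OF assms] by linarith
qed

lemma LlogL_rate_ge:
  shows "sqrt x \<le> LlogL_rate p \<alpha> x" and "x powr (1 - 1 / p) * ln (exp 1 + x) powr \<alpha> \<le> LlogL_rate p \<alpha> x"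
  unfolding LlogL_rate_def by auto

lemma LlogL_rate_ge_one: "x \<ge> 1 \<Longrightarrow> LlogL_rate p \<alpha> x \<ge> 1"
  using LlogL_rate_ge(1)[of x p \<alpha>] real_sqrt_ge_one[of x] by linarith

lemma div_LlogL_rate_sq_le_one:
  assumes "x \<ge> 1"
  shows "x / (LlogL_rate p \<alpha> x)\<^sup>2 \<le> 1"
proof -
  have "x = (sqrt x)\<^sup>2" using assms by simp
  also have "\<dots> \<le> (LlogL_rate p \<alpha> x)\<^sup>2" using assms LlogL_rate_ge(1) by (intro power_mono) auto
  finally show ?thesis using LlogL_rate_ge_one[OF assms, of p \<alpha>] by simp
qed

lemma LlogL_rate_le:
  assumes "p \<ge> 2" and "\<alpha> \<le> 0" and "x \<ge> 1"
  shows "LlogL_rate p \<alpha> x \<le> x powr (1 - 1 / p)"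
proof -
  have "sqrt x = x powr (1 / 2)" using assms by (simp add: powr_half_sqrt)
  also have "\<dots> \<le> x powr (1 - 1 / p)" using assms by (intro powr_mono) (auto simp: field_simps)
  finally have "sqrt x \<le> x powr (1 - 1 / p)" .
  moreover have "ln (exp 1 + x) powr \<alpha> \<le> 1"
    using assms ln_exp_add_ge_one[of x] powr_mono[of \<alpha> 0 "ln (exp 1 + x)"] by simp
  then have "x powr (1 - 1 / p) * ln (exp 1 + x) powr \<alpha> \<le> x powr (1 - 1 / p)"
    using mult_left_mono[of _ 1 "x powr (1 - 1 / p)"] by simp
  ultimately show ?thesis unfolding LlogL_rate_def by simp
qed

lemma powr_div_LlogL_rate_le:
  assumes "x \<ge> 1" and "r \<ge> 0"
  shows "x powr s / LlogL_rate p \<alpha> x powr r \<le> x powr (s - r * (1 - 1 / p)) * ln (exp 1 + x) powr (- (\<alpha> * r))"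
proof -
  define l where "l = ln (exp 1 + x)"
  have "l > 0" unfolding l_def using ln_exp_add_ge_one[of x] assms(1) by simp
  have "(x powr (1 - 1 / p) * l powr \<alpha>) powr r \<le> LlogL_rate p \<alpha> x powr r"
    using LlogL_rate_ge(2)[of x p \<alpha>] assms \<open>l > 0\<close> by (intro powr_mono2) (auto simp: l_def)
  then have "x powr (r * (1 - 1 / p)) * l powr (\<alpha> * r) \<le> LlogL_rate p \<alpha> x powr r"
    using assms \<open>l > 0\<close> by (simp add: powr_mult powr_powr ac_simps)
  then have "x powr s / LlogL_rate p \<alpha> x powr r \<le> x powr s / (x powr (r * (1 - 1 / p)) * l powr (\<alpha> * r))"
    using assms \<open>l > 0\<close> LlogL_rate_ge_one[of x p \<alpha>] by (intro divide_left_mono mult_pos_pos) auto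
  also have "\<dots> = x powr (s - r * (1 - 1 / p)) * l powr (- (\<alpha> * r))"
    using assms \<open>l > 0\<close> by (simp add: powr_diff powr_minus divide_simps)
  finally show ?thesis unfolding l_def .
qed

lemma div_LlogL_rate_powr_le:
  fixes x q p \<alpha> :: real
  assumes "x \<ge> 1" and "q > 0"
  shows "(x / LlogL_rate p \<alpha> x) powr (q - 2) * x / (LlogL_rate p \<alpha> x)\<^sup>2
    \<le> x powr ((q - 1) - q * (1 - 1 / p)) * ln (exp 1 + x) powr (- (\<alpha> * q))"
  using powr_div_mult_div_sq_eq[of x "LlogL_rate p \<alpha> x" q] powr_div_LlogL_rate_le[OF assms(1), of q "q - 1" p \<alpha>]
    assms LlogL_rate_ge_one[OF assms(1), of p \<alpha>] by simp

lemma div_LlogL_rate_powr_le_ln: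
  assumes "x \<ge> 1" and "p > 0"
  shows "(x / LlogL_rate p \<alpha> x) powr (p - 2) * x / (LlogL_rate p \<alpha> x)\<^sup>2 \<le> ln (exp 1 + x) powr (- (\<alpha> * p))"
  using div_LlogL_rate_powr_le[OF assms, of p \<alpha>] assms by (simp add: field_simps)

lemma ln_exp_add_le_ln_add_div_LlogL_rate:
  assumes "p \<ge> 2" and "\<alpha> \<le> 0" and "c > 1" and "x \<ge> 1"
  shows "ln (exp 1 + x) \<le> p * (1 + 1 / ln c) * ln (c + x / LlogL_rate p \<alpha> x)"
proof -
  define y where "y = x powr (1 / p)"
  have "y = x / x powr (1 - 1 / p)" unfolding y_def using assms by (simp add: powr_diff)
  also have "\<dots> \<le> x / LlogL_rate p \<alpha> x"
    using LlogL_rate_le[OF assms(1,2,4)] LlogL_rate_ge_one[OF assms(4), of p \<alpha>] assms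
    by (intro divide_left_mono) auto
  finally have "y \<le> x / LlogL_rate p \<alpha> x" .
  moreover have "0 < c + y" unfolding y_def using assms by (intro add_pos_nonneg) auto
  ultimately have y: "ln (c + y) \<le> ln (c + x / LlogL_rate p \<alpha> x)" by (intro ln_mono) auto
  have "x = y powr p" unfolding y_def using assms by (simp add: powr_powr)
  then have "ln (exp 1 + x) \<le> p * (1 + 1 / ln c) * ln (c + y)"
    using ln_exp_add_powr_le[of c p y] assms by (simp add: y_def)
  also have "\<dots> \<le> p * (1 + 1 / ln c) * ln (c + x / LlogL_rate p \<alpha> x)"
    using y assms by (intro mult_left_mono) auto
  finally show ?thesis .
qed

lemma LlogL_density_le_affine:
  assumes "p > 1" and "c > 1" and "p < 2 \<or> (p \<le> 2 \<and> \<alpha> \<le> 0)"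
  shows "\<exists>S\<ge>0. \<forall>t\<ge>0. LlogL_density p \<alpha> c t \<le> S * (1 + t)"
proof (cases "\<alpha> \<le> 0")
  case True
  have "LlogL_density p \<alpha> c t \<le> ln c powr (\<alpha> * p) * (1 + t)" if "t \<ge> 0" for t
  proof -
    have "t powr (p - 1) \<le> 1 + t"
    proof (cases "t \<le> 1")
      case True
      then show ?thesis using \<open>t \<ge> 0\<close> \<open>p > 1\<close> powr_le1[of "p - 1" t] by simp
    next
      case False
      then have "t powr (p - 1) \<le> t powr 1" using assms by (intro powr_mono) auto
      then show ?thesis using False by simp
    qed
    moreover have "ln (c + t) powr (\<alpha> * p) \<le> ln c powr (\<alpha> * p)"
      using True assms that by (intro powr_mono2') (auto simp: mult_nonpos_nonneg)
    ultimately show ?thesis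
      unfolding LlogL_density_def by (subst mult.commute) (intro mult_mono; simp)
  qed
  then show ?thesis by (intro exI[of _ "ln c powr (\<alpha> * p)"]) auto
next
  case False
  have "((\<lambda>t. LlogL_density p \<alpha> c t / (1 + t)) \<longlongrightarrow> 0) at_top"
    unfolding LlogL_density_def using assms False by real_asymp
  then have "eventually (\<lambda>t. LlogL_density p \<alpha> c t / (1 + t) < 1) at_top"
    by (rule order_tendstoD) simp
  then obtain U where U: "U \<ge> 0" "\<And>t. t \<ge> U \<Longrightarrow> LlogL_density p \<alpha> c t / (1 + t) < 1"
    unfolding eventually_at_top_linorder by (metis linear order.trans)
  define S where "S = max 1 (LlogL_density p \<alpha> c U)"
  have S: "1 \<le> S" "LlogL_density p \<alpha> c U \<le> S" unfolding S_def by auto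
  have S_le: "S \<le> S * (1 + t)" if "t \<ge> 0" for t
    using mult_left_mono[of 1 "1 + t" S] that S by simp
  have "LlogL_density p \<alpha> c t \<le> S * (1 + t)" if "t \<ge> 0" for t
  proof (cases "t \<ge> U")
    case True
    then have "LlogL_density p \<alpha> c t \<le> 1 + t" using U(2)[OF True] that by (simp add: divide_less_eq)
    also have "1 * (1 + t) \<le> S * (1 + t)" using S(1) that by (intro mult_right_mono) auto
    finally show ?thesis by simp
  next
    case below: False
    have "LlogL_density p \<alpha> c t \<le> LlogL_density p \<alpha> c U"
      unfolding LlogL_density_def using that below assms False
      by (intro mult_mono powr_mono2 ln_mono) auto
    also have "\<dots> \<le> S * (1 + t)" using S S_le[OF that] by linarith
    finally show ?thesis .
  qed
  then show ?thesis using S by (intro exI[of _ S]) auto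
qed

lemma LlogL_density_le_linear:
  assumes "p \<ge> 2" and "c > 1" and "\<alpha> \<ge> 0" and "0 \<le> t" and "t \<le> M"
  shows "LlogL_density p \<alpha> c t \<le> M powr (p - 2) * ln (c + M) powr (\<alpha> * p) * t"
proof -
  have "t powr (p - 1) \<le> M powr (p - 2) * t" using powr_le_mult_self[of t M "p - 1"] assms by simp
  moreover have "ln (c + t) powr (\<alpha> * p) \<le> ln (c + M) powr (\<alpha> * p)"
    using assms by (intro powr_mono2) auto
  ultimately have "t powr (p - 1) * ln (c + t) powr (\<alpha> * p) \<le> (M powr (p - 2) * t) * ln (c + M) powr (\<alpha> * p)"
    by (rule mult_mono) (use assms in auto)
  then show ?thesis by (simp add: LlogL_density_def ac_simps)
qed

text \<open>For negative \<open>\<alpha>\<close> the logarithmic factor decreases; it is estimated by \<open>ln c\<close> below \<open>\<surd>M\<close> and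
  by half of \<open>ln (c + M)\<close> above \<open>\<surd>M\<close>.\<close>
lemma LlogL_density_le_linear_neg:
  assumes "p \<ge> 2" and "c > 1" and "\<alpha> \<le> 0" and "0 \<le> t" and "t \<le> M"
  shows "LlogL_density p \<alpha> c t
    \<le> (ln c powr (\<alpha> * p) * M powr ((p - 2) / 2) + 2 powr (- (\<alpha> * p)) * ln (c + M) powr (\<alpha> * p) * M powr (p - 2)) * t"
    (is "_ \<le> (?low + ?high) * t")
proof -
  have \<beta>: "\<alpha> * p \<le> 0" using assms by (simp add: mult_nonpos_nonneg)
  have "LlogL_density p \<alpha> c t \<le> ?low * t \<or> LlogL_density p \<alpha> c t \<le> ?high * t"
  proof (cases "t \<le> sqrt M")
    case True
    have "t powr (p - 1) \<le> sqrt M powr (p - 2) * t" using powr_le_mult_self[of t "sqrt M" "p - 1"] True assms by simp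
    also have "sqrt M powr (p - 2) = M powr ((p - 2) / 2)"
      using assms by (simp add: powr_half_sqrt[symmetric] powr_powr)
    finally have "t powr (p - 1) \<le> M powr ((p - 2) / 2) * t" .
    moreover have "ln (c + t) powr (\<alpha> * p) \<le> ln c powr (\<alpha> * p)" using \<beta> assms by (intro powr_mono2') auto
    ultimately have "t powr (p - 1) * ln (c + t) powr (\<alpha> * p) \<le> (M powr ((p - 2) / 2) * t) * ln c powr (\<alpha> * p)"
      by (rule mult_mono) (use assms in auto)
    then show ?thesis by (simp add: LlogL_density_def ac_simps)
  next
    case False
    have t_pow: "t powr (p - 1) \<le> M powr (p - 2) * t" using powr_le_mult_self[of t M "p - 1"] assms by simp
    have "ln (c + M) / 2 \<le> ln (c + t)"
    proof -
      have "0 < c + sqrt M" using assms by (intro add_pos_nonneg) auto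
      then have "ln (c + sqrt M) \<le> ln (c + t)" using False by (intro ln_mono) auto
      then show ?thesis using ln_add_half_le_ln_add_sqrt[of c M] assms by linarith
    qed
    then have "ln (c + t) powr (\<alpha> * p) \<le> (ln (c + M) / 2) powr (\<alpha> * p)"
      using \<beta> assms by (intro powr_mono2') auto
    also have "\<dots> = 2 powr (- (\<alpha> * p)) * ln (c + M) powr (\<alpha> * p)"
      by (simp add: powr_divide powr_minus_divide)
    finally have "t powr (p - 1) * ln (c + t) powr (\<alpha> * p)
        \<le> (M powr (p - 2) * t) * (2 powr (- (\<alpha> * p)) * ln (c + M) powr (\<alpha> * p))"
      using t_pow by (intro mult_mono) (use assms in auto)
    then show ?thesis by (simp add: LlogL_density_def ac_simps)
  qed
  moreover have "0 \<le> ?low * t" "0 \<le> ?high * t" using assms by auto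
  ultimately show ?thesis by (auto simp: distrib_right)
qed

definition LlogL_density_controlled :: "real \<Rightarrow> real \<Rightarrow> real \<Rightarrow> bool" where
  "LlogL_density_controlled p \<alpha> c \<longleftrightarrow> (\<exists>B. \<forall>x\<ge>1. \<exists>a b. 0 \<le> a \<and> 0 \<le> b \<and>
     (\<forall>t. 0 \<le> t \<longrightarrow> t \<le> x / LlogL_rate p \<alpha> x \<longrightarrow> LlogL_density p \<alpha> c t \<le> a + b * t) \<and>
     a + b * x / (LlogL_rate p \<alpha> x)\<^sup>2 \<le> B)"

lemma LlogL_density_controlledI:
  assumes "\<And>x. x \<ge> 1 \<Longrightarrow> 0 \<le> a x" and "\<And>x. x \<ge> 1 \<Longrightarrow> 0 \<le> b x"
    and "\<And>x t. x \<ge> 1 \<Longrightarrow> 0 \<le> t \<Longrightarrow> t \<le> x / LlogL_rate p \<alpha> x \<Longrightarrow> LlogL_density p \<alpha> c t \<le> a x + b x * t"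
    and "\<And>x. x \<ge> 1 \<Longrightarrow> a x + b x * x / (LlogL_rate p \<alpha> x)\<^sup>2 \<le> B"
  shows "LlogL_density_controlled p \<alpha> c"
  unfolding LlogL_density_controlled_def using assms by blast

lemma LlogL_density_controlled_small_p:
  assumes "p > 1" and "c > 1" and "p < 2 \<or> (p \<le> 2 \<and> \<alpha> \<le> 0)"
  shows "LlogL_density_controlled p \<alpha> c"
proof -
  obtain S where S: "S \<ge> 0" "\<And>t. t \<ge> 0 \<Longrightarrow> LlogL_density p \<alpha> c t \<le> S * (1 + t)"
    using LlogL_density_le_affine[OF assms] by blast
  have "S + S * x / (LlogL_rate p \<alpha> x)\<^sup>2 \<le> 2 * S" if "x \<ge> 1" for x
    using mult_left_mono[OF div_LlogL_rate_sq_le_one[OF that, of p \<alpha>] S(1)] by simp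
  then show ?thesis
    using S by (intro LlogL_density_controlledI[where a = "\<lambda>_. S" and b = "\<lambda>_. S" and B = "2 * S"]) (auto simp: distrib_left)
qed

lemma div_LlogL_rate_powr_ln_le_pos:
  assumes "p \<ge> 2" and "c > 1" and "\<alpha> \<ge> 0" and "x \<ge> 1"
  shows "(x / LlogL_rate p \<alpha> x) powr (p - 2) * ln (c + x / LlogL_rate p \<alpha> x) powr (\<alpha> * p) * x / (LlogL_rate p \<alpha> x)\<^sup>2
    \<le> (1 + ln c) powr (\<alpha> * p)"
proof -
  define R where "R = LlogL_rate p \<alpha> x"
  define l where "l = ln (exp 1 + x)"
  define M where "M = x / R"
  have R: "R \<ge> 1" unfolding R_def using LlogL_rate_ge_one[OF \<open>x \<ge> 1\<close>] .
  have l: "l \<ge> 1" unfolding l_def using ln_exp_add_ge_one \<open>x \<ge> 1\<close> by simp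
  have M: "0 \<le> M" "M \<le> x" unfolding M_def using R \<open>x \<ge> 1\<close> by (auto simp: divide_le_eq)
  have "ln (c + M) \<le> ln (c + x)" using M assms by (intro ln_mono) auto
  also have "\<dots> \<le> (1 + ln c) * l" unfolding l_def using ln_add_le_ln_exp_add assms by simp
  finally have "ln (c + M) powr (\<alpha> * p) \<le> ((1 + ln c) * l) powr (\<alpha> * p)"
    using assms M by (intro powr_mono2) auto
  also have "\<dots> = (1 + ln c) powr (\<alpha> * p) * l powr (\<alpha> * p)" using assms l by (simp add: powr_mult)
  finally have "(M powr (p - 2) * x / R\<^sup>2) * ln (c + M) powr (\<alpha> * p)
      \<le> l powr (- (\<alpha> * p)) * ((1 + ln c) powr (\<alpha> * p) * l powr (\<alpha> * p))"
    using div_LlogL_rate_powr_le_ln[OF \<open>x \<ge> 1\<close>, of p \<alpha>] assms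
    by (intro mult_mono) (auto simp: M_def R_def l_def)
  also have "\<dots> = (1 + ln c) powr (\<alpha> * p)" using l by (simp add: powr_minus field_simps)
  finally show ?thesis unfolding M_def R_def by (simp add: ac_simps)
qed

lemma LlogL_density_controlled_large_p_pos:
  assumes "p \<ge> 2" and "c > 1" and "\<alpha> \<ge> 0"
  shows "LlogL_density_controlled p \<alpha> c"
  using LlogL_density_le_linear[OF assms] div_LlogL_rate_powr_ln_le_pos[OF assms]
  by (intro LlogL_density_controlledI[where a = "\<lambda>_. 0" and B = "(1 + ln c) powr (\<alpha> * p)"
        and b = "\<lambda>x. (x / LlogL_rate p \<alpha> x) powr (p - 2) * ln (c + x / LlogL_rate p \<alpha> x) powr (\<alpha> * p)"]) auto

lemma div_LlogL_rate_powr_ln_le_neg: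
  assumes "p \<ge> 2" and "c > 1" and "\<alpha> \<le> 0" and "x \<ge> 1"
  shows "(x / LlogL_rate p \<alpha> x) powr (p - 2) * ln (c + x / LlogL_rate p \<alpha> x) powr (\<alpha> * p) * x / (LlogL_rate p \<alpha> x)\<^sup>2
    \<le> (p * (1 + 1 / ln c)) powr (- (\<alpha> * p))"
proof -
  define R where "R = LlogL_rate p \<alpha> x"
  define l where "l = ln (exp 1 + x)"
  define M where "M = x / R"
  define P where "P = p * (1 + 1 / ln c)"
  have "P > 0" unfolding P_def using assms by (simp add: add_pos_pos)
  have l: "l \<ge> 1" unfolding l_def using ln_exp_add_ge_one \<open>x \<ge> 1\<close> by simp
  have "l / P \<le> ln (c + M)"
    using ln_exp_add_le_ln_add_div_LlogL_rate[OF assms(1,3,2,4)] \<open>P > 0\<close>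
    unfolding l_def P_def M_def R_def by (simp add: divide_le_eq mult.commute)
  then have "ln (c + M) powr (\<alpha> * p) \<le> (l / P) powr (\<alpha> * p)"
    using assms l \<open>P > 0\<close> by (intro powr_mono2') (auto simp: mult_nonpos_nonneg)
  also have "\<dots> = l powr (\<alpha> * p) * P powr (- (\<alpha> * p))"
    using l \<open>P > 0\<close> by (simp add: powr_divide powr_minus_divide)
  finally have "(M powr (p - 2) * x / R\<^sup>2) * ln (c + M) powr (\<alpha> * p)
      \<le> l powr (- (\<alpha> * p)) * (l powr (\<alpha> * p) * P powr (- (\<alpha> * p)))"
    using div_LlogL_rate_powr_le_ln[OF \<open>x \<ge> 1\<close>, of p \<alpha>] assms
    by (intro mult_mono) (auto simp: M_def R_def l_def)
  also have "\<dots> = P powr (- (\<alpha> * p))" using l by (simp add: powr_minus field_simps)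
  finally show ?thesis unfolding M_def R_def P_def by (simp add: ac_simps)
qed

lemma div_LlogL_rate_powr_half_bounded:
  assumes "p > 2"
  shows "\<exists>T. \<forall>x\<ge>1. (x / LlogL_rate p \<alpha> x) powr ((p - 2) / 2) * x / (LlogL_rate p \<alpha> x)\<^sup>2 \<le> T"
proof -
  have "1 / p - 1 / 2 < 0" using assms by (simp add: field_simps)
  then obtain T where T: "\<And>x. x \<ge> 1 \<Longrightarrow> x powr (1 / p - 1 / 2) * ln (exp 1 + x) powr (- (\<alpha> * ((p + 2) / 2))) \<le> T"
    using powr_ln_exp_add_bounded by blast
  have "(p + 2) / 2 - 2 = (p - 2) / 2" and "(p + 2) / 2 - 1 - (p + 2) / 2 * (1 - 1 / p) = 1 / p - 1 / 2"
    using assms by (simp_all add: field_simps)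
  then have "(x / LlogL_rate p \<alpha> x) powr ((p - 2) / 2) * x / (LlogL_rate p \<alpha> x)\<^sup>2 \<le> T" if "x \<ge> 1" for x
    using div_LlogL_rate_powr_le[OF that, of "(p + 2) / 2" p \<alpha>] T[OF that] assms by simp
  then show ?thesis by blast
qed

lemma LlogL_density_controlled_large_p_neg:
  assumes "p > 2" and "c > 1" and "\<alpha> \<le> 0"
  shows "LlogL_density_controlled p \<alpha> c"
proof -
  obtain T where T: "\<And>x. x \<ge> 1 \<Longrightarrow> (x / LlogL_rate p \<alpha> x) powr ((p - 2) / 2) * x / (LlogL_rate p \<alpha> x)\<^sup>2 \<le> T"
    using div_LlogL_rate_powr_half_bounded[OF assms(1)] by blast
  define M where "M x = x / LlogL_rate p \<alpha> x" for x
  define b where "b x = ln c powr (\<alpha> * p) * M x powr ((p - 2) / 2)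
    + 2 powr (- (\<alpha> * p)) * ln (c + M x) powr (\<alpha> * p) * M x powr (p - 2)" for x
  have "b x * x / (LlogL_rate p \<alpha> x)\<^sup>2
      \<le> ln c powr (\<alpha> * p) * T + 2 powr (- (\<alpha> * p)) * (p * (1 + 1 / ln c)) powr (- (\<alpha> * p))" if "x \<ge> 1" for x
  proof -
    have "b x * x / (LlogL_rate p \<alpha> x)\<^sup>2
        = ln c powr (\<alpha> * p) * (M x powr ((p - 2) / 2) * x / (LlogL_rate p \<alpha> x)\<^sup>2)
          + 2 powr (- (\<alpha> * p)) * (M x powr (p - 2) * ln (c + M x) powr (\<alpha> * p) * x / (LlogL_rate p \<alpha> x)\<^sup>2)"
      unfolding b_def by (simp add: algebra_simps add_divide_distrib)
    also have "\<dots> \<le> ln c powr (\<alpha> * p) * T + 2 powr (- (\<alpha> * p)) * (p * (1 + 1 / ln c)) powr (- (\<alpha> * p))"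
      using T[OF that] div_LlogL_rate_powr_ln_le_neg[of p c \<alpha> x] assms that
      unfolding M_def by (intro add_mono mult_left_mono) auto
    finally show ?thesis .
  qed
  then show ?thesis
    using LlogL_density_le_linear_neg[of p c \<alpha>] assms
    by (intro LlogL_density_controlledI[where a = "\<lambda>_. 0" and b = b]) (auto simp: b_def M_def)
qed

lemma LlogL_density_controlled:
  assumes "p > 1" and "c > 1"
  shows "LlogL_density_controlled p \<alpha> c"
proof -
  consider "p \<ge> 2" "\<alpha> \<ge> 0" | "p > 2" "\<alpha> \<le> 0" | "p < 2 \<or> (p \<le> 2 \<and> \<alpha> \<le> 0)" by linarith
  then show ?thesis
    by cases (use assms LlogL_density_controlled_large_p_pos LlogL_density_controlled_large_p_neg
        LlogL_density_controlled_small_p in auto)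
qed

lemma LlogL_Phi_controlled:
  assumes "p > 1" and "c > 1"
  shows "\<exists>B. \<forall>x\<ge>1. \<exists>a b. 0 \<le> a \<and> 0 \<le> b \<and>
    (\<forall>u. 0 \<le> u \<longrightarrow> u \<le> x / LlogL_rate p \<alpha> x \<longrightarrow> LlogL_Phi p \<alpha> c u \<le> a + b * u\<^sup>2) \<and>
    a + b * x / (LlogL_rate p \<alpha> x)\<^sup>2 \<le> B"
proof -
  obtain B where B: "\<forall>x\<ge>1. \<exists>a b. 0 \<le> a \<and> 0 \<le> b \<and>
      (\<forall>t. 0 \<le> t \<longrightarrow> t \<le> x / LlogL_rate p \<alpha> x \<longrightarrow> LlogL_density p \<alpha> c t \<le> a + b * t) \<and>
      a + b * x / (LlogL_rate p \<alpha> x)\<^sup>2 \<le> B"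
    using LlogL_density_controlled[OF assms] unfolding LlogL_density_controlled_def by blast
  show ?thesis
  proof (rule exI[of _ "2 * B"], intro allI impI)
    fix x :: real
    assume "x \<ge> 1"
    then obtain a b where ab: "0 \<le> a" "0 \<le> b"
      "\<And>t. 0 \<le> t \<Longrightarrow> t \<le> x / LlogL_rate p \<alpha> x \<Longrightarrow> LlogL_density p \<alpha> c t \<le> a + b * t"
      "a + b * x / (LlogL_rate p \<alpha> x)\<^sup>2 \<le> B"
      using B by blast
    have "a * (x / (LlogL_rate p \<alpha> x)\<^sup>2) \<le> a"
      using mult_left_mono[OF div_LlogL_rate_sq_le_one[OF \<open>x \<ge> 1\<close>] ab(1)] by simp
    moreover have "0 \<le> b * x / (LlogL_rate p \<alpha> x)\<^sup>2" using ab \<open>x \<ge> 1\<close> by simp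
    ultimately have "a + (a + b) * x / (LlogL_rate p \<alpha> x)\<^sup>2 \<le> 2 * B"
      using ab(4) by (simp add: distrib_right add_divide_distrib)
    moreover have "LlogL_Phi p \<alpha> c u \<le> a + (a + b) * u\<^sup>2" if "0 \<le> u" "u \<le> x / LlogL_rate p \<alpha> x" for u
      using LlogL_Phi_quadratic_majorant[OF that(1) ab(1,2)] ab(3) that by simp
    ultimately show "\<exists>a b. 0 \<le> a \<and> 0 \<le> b \<and>
        (\<forall>u. 0 \<le> u \<longrightarrow> u \<le> x / LlogL_rate p \<alpha> x \<longrightarrow> LlogL_Phi p \<alpha> c u \<le> a + b * u\<^sup>2) \<and>
        a + b * x / (LlogL_rate p \<alpha> x)\<^sup>2 \<le> 2 * B"
      using ab by (intro exI[of _ a] exI[of _ "a + b"]) auto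
  qed
qed

theorem lemma5p2:
  fixes p \<alpha> c :: real
  assumes "1 < p" and "c > 1" and "young_function (LlogL_Phi p \<alpha> c)"
  shows "\<exists>C>0. \<forall>(N::nat) (A::int set) (\<epsilon>::int \<Rightarrow> complex).
           N \<ge> 1 \<longrightarrow> finite A \<longrightarrow> card A \<le> N \<longrightarrow> (\<forall>n\<in>A. norm (\<epsilon> n) \<le> 1) \<longrightarrow>
           LplogL_norm p \<alpha> c (\<lambda>x. \<Sum>n\<in>A. \<epsilon> n * cis (of_int n * x))
             \<le> C * max (sqrt (real N)) (real N powr (1 - 1 / p) * (ln (exp 1 + real N)) powr \<alpha>)"
proof -
  obtain B where B: "\<forall>x\<ge>1. \<exists>a b. 0 \<le> a \<and> 0 \<le> b \<and>
      (\<forall>u. 0 \<le> u \<longrightarrow> u \<le> x / LlogL_rate p \<alpha> x \<longrightarrow> LlogL_Phi p \<alpha> c u \<le> a + b * u\<^sup>2) \<and>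
      a + b * x / (LlogL_rate p \<alpha> x)\<^sup>2 \<le> B"
    using LlogL_Phi_controlled[OF assms(1,2)] by blast
  have "LplogL_norm p \<alpha> c (\<lambda>x. \<Sum>n\<in>A. \<epsilon> n * cis (of_int n * x)) \<le> max 1 (2 * pi * B) * LlogL_rate p \<alpha> N"
    if "N \<ge> 1" "finite A" "card A \<le> N" "\<forall>n\<in>A. norm (\<epsilon> n) \<le> 1" for N :: nat and A and \<epsilon> :: "int \<Rightarrow> complex"
  proof -
    have N: "real N \<ge> 1" using that by simp
    obtain a b :: real where ab: "0 \<le> a" "0 \<le> b"
      "\<forall>u. 0 \<le> u \<longrightarrow> u \<le> N / LlogL_rate p \<alpha> N \<longrightarrow> LlogL_Phi p \<alpha> c u \<le> a + b * u\<^sup>2"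
      "a + b * N / (LlogL_rate p \<alpha> N)\<^sup>2 \<le> B"
      using B N by blast
    have R: "LlogL_rate p \<alpha> N > 0" using LlogL_rate_ge_one[OF N, of p \<alpha>] by linarith
    have "LplogL_norm p \<alpha> c (\<lambda>x. \<Sum>n\<in>A. \<epsilon> n * cis (of_int n * x))
        \<le> max 1 (2 * pi * (a + b * N / (LlogL_rate p \<alpha> N)\<^sup>2)) * LlogL_rate p \<alpha> N"
      unfolding LplogL_norm_def using that R ab
      by (intro luxemburg_norm_trig_poly_le[OF assms(3)]) auto
    also have "\<dots> \<le> max 1 (2 * pi * B) * LlogL_rate p \<alpha> N"
      using ab(4) R by (intro mult_right_mono max.mono) auto
    finally show ?thesis .
  qed
  moreover have "max 1 (2 * pi * B) > 0" by simp
  ultimately show ?thesis unfolding LlogL_rate_def by blast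
qed

end
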